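(* For every $n\in\mathbb{N}$, let $$\Omega_n=\{x\in(0,1)\setminus\mathbb{Q}:\ g_k(x)\in\{1,2,\dots,n\}\ \text{for all } k\in\mathbb{N}\},$$ where $g_k(x)$ denotes the $k$-th symbol of $x$ in its $\bar O^1$-expansion. Then the Hausdorff dimension of $\Omega_n$ is $\dim_H(\Omega_n)=0$ for every $n\in\mathbb{N}$.
   Context: Every irrational $x\in(0,1)$ has a unique representation ($\bar O^1$-expansion, the difference form of the Ostrogradsky–Sierpiński–Pierce expansion) $$x=\sum_{k=1}^\infty\frac{(-1)^{k-1}}{g_1(g_1+g_2)\cdots(g_1+g_2+\dots+g_k)},\qquad g_k=g_k(x)\in\mathbb{N}=\{1,2,3,\dots\},$$ and conversely every infinite sequence of positive integers $(g_k)$ gives an irrational number in $(0,1)$ via this series. The numbers $g_k(x)$ are called the $\bar O^1$-symbols of $x$. *)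

theory Defs
  imports "HOL-Analysis.Analysis"
begin

definition hausdorff_pre :: "real \<Rightarrow> real \<Rightarrow> 'a::metric_space set \<Rightarrow> ennreal" where
  "hausdorff_pre s \<delta> E =
     (INF U \<in> {U :: nat \<Rightarrow> 'a set. E \<subseteq> (\<Union>i. U i) \<and> (\<forall>i. bounded (U i) \<and> diameter (U i) \<le> \<delta>)}.
        (\<Sum>i. ennreal (diameter (U i) powr s)))"

definition hausdorff_measure :: "real \<Rightarrow> 'a::metric_space set \<Rightarrow> ennreal" where
  "hausdorff_measure s E = (SUP \<delta> \<in> {0<..}. hausdorff_pre s \<delta> E)"

text \<open>dim_H E = inf of s > 0 with H^s(E) = 0 (infimum of the empty set is +infinity).\<close>
definition hausdorff_dim :: "'a::metric_space set \<Rightarrow> ereal" where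
  "hausdorff_dim E = Inf {ereal s | s. 0 < s \<and> hausdorff_measure s E = 0}"

text \<open>Sequences are indexed from 0 internally: g 0 is the paper's g_1.
  Term k (0-based) is (-1)^k / prod_{j<=k} (g_0 + ... + g_j).\<close>
definition obar_term :: "(nat \<Rightarrow> nat) \<Rightarrow> nat \<Rightarrow> real" where
  "obar_term g k = (-1) ^ k / (\<Prod>j\<le>k. real (\<Sum>i\<le>j. g i))"

definition obar_digits :: "real \<Rightarrow> nat \<Rightarrow> nat" where
  "obar_digits x = (THE g. (\<forall>k. 1 \<le> g k) \<and> obar_term g sums x)"

definition obar_symbol :: "nat \<Rightarrow> real \<Rightarrow> nat" where
  "obar_symbol k x = obar_digits x (k - 1)"

definition Omega :: "nat \<Rightarrow> real set" where
  "Omega n = {x \<in> {0<..<1} - \<rat>. \<forall>k\<ge>1. obar_symbol k x \<in> {1..n}}"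

end

theory Submission
  imports Defs
begin

text \<open>With \<open>q\<^sub>k = g\<^sub>1 + \<dots> + g\<^sub>k\<close> the expansion is the alternating series
  \<open>\<Sum>\<^sub>k (-1)\<^sup>k\<^sup>-\<^sup>1 / (q\<^sub>1\<cdots>q\<^sub>k)\<close> of a strictly increasing sequence of positive integers,
  so \<open>q\<^sub>k \<ge> k\<close> and, by Leibniz, cutting it after \<open>m\<close> terms leaves an error of at most
  \<open>1/(m+1)!\<close>. Hence \<open>\<Omega>\<^sub>n\<close> is covered by the \<open>n\<^sup>m\<close> balls of radius \<open>1/(m+1)!\<close> around the
  truncations with symbols in \<open>{1..n}\<close>, and \<open>n\<^sup>m (2/(m+1)!)\<^sup>s \<rightarrow> 0\<close> for every \<open>s > 0\<close>.
  That the symbols of an irrational are well defined rests on the Pierce-type algorithm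
  \<open>r \<mapsto> 1 - \<lfloor>1/r\<rfloor> r\<close> (existence) and on \<open>q\<^sub>1 = \<lfloor>1/x\<rfloor>\<close> (uniqueness).\<close>

definition pierce_seq :: "(nat \<Rightarrow> nat) \<Rightarrow> bool" where
  "pierce_seq q \<longleftrightarrow> 0 < q 0 \<and> strict_mono q"

definition recip_prod :: "(nat \<Rightarrow> nat) \<Rightarrow> nat \<Rightarrow> real" where
  "recip_prod q k = 1 / (\<Prod>j\<le>k. real (q j))"

definition alt_recip_sum :: "(nat \<Rightarrow> nat) \<Rightarrow> real" where
  "alt_recip_sum q = (\<Sum>k. (-1) ^ k * recip_prod q k)"

lemma pierce_seq_Suc_le: "pierce_seq q \<Longrightarrow> Suc k \<le> q k"
proof (induction k)
  case (Suc k)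
  then show ?case
    unfolding pierce_seq_def by (metis Suc_leI le_less_trans lessI strict_mono_def)
qed (simp add: pierce_seq_def)

lemma pierce_seq_shift: "pierce_seq q \<Longrightarrow> pierce_seq (q \<circ> Suc)"
  using pierce_seq_Suc_le[of q 1] unfolding pierce_seq_def strict_mono_def by auto

lemma fact_le_prod_pierce_seq:
  assumes "pierce_seq q"
  shows "fact (Suc k) \<le> (\<Prod>j\<le>k. real (q j))"
proof (induction k)
  case 0
  then show ?case using pierce_seq_Suc_le[OF assms, of 0] by simp
next
  case (Suc k)
  have "fact (Suc (Suc k)) = real (Suc (Suc k)) * fact (Suc k)" by simp
  also have "\<dots> \<le> real (q (Suc k)) * (\<Prod>j\<le>k. real (q j))"
    using Suc pierce_seq_Suc_le[OF assms, of "Suc k"] by (intro mult_mono) auto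
  finally show ?case by (simp add: mult.commute)
qed

lemma recip_prod_pos: "pierce_seq q \<Longrightarrow> 0 < recip_prod q k"
  unfolding recip_prod_def using less_le_trans[OF fact_gt_zero fact_le_prod_pierce_seq] by simp

lemma recip_prod_le_inverse_fact:
  "pierce_seq q \<Longrightarrow> recip_prod q k \<le> inverse (fact (Suc k))"
  unfolding recip_prod_def inverse_eq_divide using fact_le_prod_pierce_seq[of q k]
  by (intro frac_le) (auto simp del: fact_Suc)

lemma recip_prod_Suc: "recip_prod q (Suc k) = recip_prod q k / real (q (Suc k))"
  by (simp add: recip_prod_def)

lemma recip_prod_Suc_less: "pierce_seq q \<Longrightarrow> recip_prod q (Suc k) < recip_prod q k"
  using recip_prod_pos[of q k] pierce_seq_Suc_le[of q "Suc k"]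
  by (simp add: recip_prod_Suc divide_less_eq)

lemma recip_prod_shift: "recip_prod q (Suc k) = recip_prod (q \<circ> Suc) k / real (q 0)"
  unfolding recip_prod_def by (subst prod.atMost_Suc_shift) (simp add: field_simps)

lemma inverse_fact_Suc_tendsto_0: "(\<lambda>k. inverse (fact (Suc k)) :: real) \<longlonglongrightarrow> 0"
  using LIMSEQ_Suc[OF summable_LIMSEQ_zero[OF summable_exp[of "1::real"]]] by simp

lemma recip_prod_tendsto_0: "pierce_seq q \<Longrightarrow> recip_prod q \<longlonglongrightarrow> 0"
proof (rule Lim_null_comparison[OF _ inverse_fact_Suc_tendsto_0])
  assume "pierce_seq q"
  then show "\<forall>\<^sub>F k in sequentially. norm (recip_prod q k) \<le> inverse (fact (Suc k))"
    using recip_prod_le_inverse_fact recip_prod_pos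
    by (intro always_eventually) (simp add: less_imp_le del: fact_Suc)
qed

lemma alt_recip_sum_Leibniz:
  assumes "pierce_seq q"
  shows "(\<lambda>k. (-1) ^ k * recip_prod q k) sums alt_recip_sum q"
    and "(\<Sum>k<2 * m. (-1) ^ k * recip_prod q k) \<le> alt_recip_sum q"
    and "alt_recip_sum q \<le> (\<Sum>k<2 * m + 1. (-1) ^ k * recip_prod q k)"
proof -
  note L = summable_Leibniz'[OF recip_prod_tendsto_0[OF assms]
      less_imp_le[OF recip_prod_pos[OF assms]] less_imp_le[OF recip_prod_Suc_less[OF assms]]]
  show "(\<lambda>k. (-1) ^ k * recip_prod q k) sums alt_recip_sum q"
    unfolding alt_recip_sum_def by (rule summable_sums[OF L(1)])
  show "(\<Sum>k<2 * m. (-1) ^ k * recip_prod q k) \<le> alt_recip_sum q"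
    unfolding alt_recip_sum_def by (rule L(2))
  show "alt_recip_sum q \<le> (\<Sum>k<2 * m + 1. (-1) ^ k * recip_prod q k)"
    unfolding alt_recip_sum_def by (rule L(4))
qed

lemma alt_recip_sum_remainder:
  assumes "pierce_seq q"
  shows "\<bar>alt_recip_sum q - (\<Sum>k<m. (-1) ^ k * recip_prod q k)\<bar> \<le> recip_prod q m"
proof (cases "even m")
  case True
  then obtain n where "m = 2 * n" by auto
  then show ?thesis
    using alt_recip_sum_Leibniz(2,3)[OF assms, of n] by auto
next
  case False
  then obtain n where "m = 2 * n + 1" by (metis oddE)
  then show ?thesis
    using alt_recip_sum_Leibniz(2)[OF assms, of "Suc n"] alt_recip_sum_Leibniz(3)[OF assms, of n]
    by auto
qed

lemma alt_recip_sum_bounds: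
  assumes "pierce_seq q"
  shows "1 / real (q 0 + 1) < alt_recip_sum q" and "alt_recip_sum q < 1 / real (q 0)"
proof -
  have q0: "1 \<le> q 0" and q1: "q 0 + 1 \<le> q 1"
    using assms unfolding pierce_seq_def strict_mono_def by (auto simp: Suc_le_eq)
  have a0: "recip_prod q 0 = 1 / real (q 0)"
    by (simp add: recip_prod_def)
  have "recip_prod q 1 \<le> recip_prod q 0 / real (q 0 + 1)"
    using recip_prod_Suc[of q 0] recip_prod_pos[OF assms, of 0] q1
    by (auto intro: divide_left_mono)
  moreover have "recip_prod q 0 - recip_prod q 0 / real (q 0 + 1) = 1 / real (q 0 + 1)"
    using q0 unfolding a0 by (simp add: divide_simps)
  moreover have "(\<Sum>k<2 * 2. (-1) ^ k * recip_prod q k)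
      = recip_prod q 0 - recip_prod q 1 + (recip_prod q 2 - recip_prod q 3)"
    by (simp add: eval_nat_numeral)
  moreover have "recip_prod q 3 < recip_prod q 2"
    using recip_prod_Suc_less[OF assms, of 2] by (simp add: numeral_3_eq_3)
  ultimately show "1 / real (q 0 + 1) < alt_recip_sum q"
    using alt_recip_sum_Leibniz(2)[OF assms, of 2] by linarith
  have "(\<Sum>k<2 * 1 + 1. (-1) ^ k * recip_prod q k)
      = recip_prod q 0 - (recip_prod q 1 - recip_prod q 2)"
    by (simp add: eval_nat_numeral)
  moreover have "recip_prod q 2 < recip_prod q 1"
    using recip_prod_Suc_less[OF assms, of 1] by (simp add: numeral_2_eq_2)
  ultimately show "alt_recip_sum q < 1 / real (q 0)"
    using alt_recip_sum_Leibniz(3)[OF assms, of 1] a0 by linarith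
qed

lemma floor_inverse_alt_recip_sum:
  assumes "pierce_seq q"
  shows "nat \<lfloor>1 / alt_recip_sum q\<rfloor> = q 0"
proof -
  note bounds = alt_recip_sum_bounds[OF assms]
  have q0: "0 < real (q 0)" using assms pierce_seq_def by simp
  have pos: "0 < alt_recip_sum q"
    using bounds(1) by (rule less_trans[rotated]) simp
  have "real (q 0) * alt_recip_sum q < 1"
    using bounds(2) q0 by (simp add: less_divide_eq mult.commute)
  then have lower: "real (q 0) < 1 / alt_recip_sum q"
    using pos by (simp add: less_divide_eq)
  have "1 < (real (q 0) + 1) * alt_recip_sum q"
    using bounds(1) by (simp add: divide_less_eq mult.commute add.commute)
  then have upper: "1 / alt_recip_sum q < real (q 0) + 1"
    using pos by (simp add: divide_less_eq)
  have "\<lfloor>1 / alt_recip_sum q\<rfloor> = int (q 0)"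
    by (rule floor_unique) (use lower upper in auto)
  then show ?thesis by simp
qed

lemma alt_recip_sum_shift:
  assumes "pierce_seq q"
  shows "alt_recip_sum q = (1 - alt_recip_sum (q \<circ> Suc)) / real (q 0)"
proof -
  have "(\<lambda>k. (-1 / real (q 0)) * ((-1) ^ k * recip_prod (q \<circ> Suc) k))
      sums ((-1 / real (q 0)) * alt_recip_sum (q \<circ> Suc))"
    by (intro sums_mult alt_recip_sum_Leibniz(1) pierce_seq_shift assms)
  then have "(\<lambda>k. (-1) ^ Suc k * recip_prod q (Suc k))
      sums ((-1 / real (q 0)) * alt_recip_sum (q \<circ> Suc))"
    by (simp add: recip_prod_shift)
  then have "(\<lambda>k. (-1) ^ k * recip_prod q k)
      sums ((-1 / real (q 0)) * alt_recip_sum (q \<circ> Suc) + (-1) ^ 0 * recip_prod q 0)"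
    by (rule sums_Suc_iff[THEN iffD1])
  then have "alt_recip_sum q = (-1 / real (q 0)) * alt_recip_sum (q \<circ> Suc) + 1 / real (q 0)"
    using sums_unique2[OF alt_recip_sum_Leibniz(1)[OF assms]] by (simp add: recip_prod_def)
  then show ?thesis by (simp add: diff_divide_distrib)
qed

text \<open>The first entry is read off as \<open>\<lfloor>1/x\<rfloor>\<close>; the shift identity then passes the
  equality on to the tails.\<close>
lemma alt_recip_sum_inj:
  assumes "pierce_seq q" "pierce_seq q'" "alt_recip_sum q = alt_recip_sum q'"
  shows "q = q'"
proof
  fix k
  from assms show "q k = q' k"
  proof (induction k arbitrary: q q')
    case 0
    then show ?case by (metis floor_inverse_alt_recip_sum)
  next
    case (Suc k)
    have head: "q 0 = q' 0"
      using Suc.prems by (metis floor_inverse_alt_recip_sum)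
    have "real (q 0) \<noteq> 0"
      using Suc.prems(1) pierce_seq_def by simp
    then have "alt_recip_sum (q \<circ> Suc) = alt_recip_sum (q' \<circ> Suc)"
      using alt_recip_sum_shift[OF Suc.prems(1)] alt_recip_sum_shift[OF Suc.prems(2)]
        Suc.prems(3) head by (simp add: divide_cancel_right)
    then have "(q \<circ> Suc) k = (q' \<circ> Suc) k"
      using Suc.IH pierce_seq_shift Suc.prems(1,2) by blast
    then show ?case by simp
  qed
qed

lemma pierce_step_bounds:
  fixes y :: real
  assumes "0 < y" "y < 1" "y \<notin> \<rat>"
  defines "b \<equiv> nat \<lfloor>1 / y\<rfloor>"
  shows "1 \<le> b" and "0 < 1 - real b * y" and "1 - real b * y < 1 / real (b + 1)"
    and "1 - real b * y \<notin> \<rat>"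
proof -
  have "1 < 1 / y" using assms by (simp add: less_divide_eq)
  then have "1 \<le> \<lfloor>1 / y\<rfloor>" by (simp add: le_floor_iff)
  then show b1: "1 \<le> b" unfolding b_def by linarith
  have b_floor: "real b = of_int \<lfloor>1 / y\<rfloor>"
    unfolding b_def by (rule of_nat_nat) (use \<open>1 \<le> \<lfloor>1 / y\<rfloor>\<close> in linarith)
  have "real b \<le> 1 / y"
    using b_floor by simp
  then have "real b * y \<le> 1"
    using assms(1) by (simp add: le_divide_eq)
  moreover have "real b * y \<noteq> 1"
  proof
    assume "real b * y = 1"
    then have "y = 1 / real b" using b1 by (simp add: field_simps)
    with assms(3) show False by simp
  qed
  ultimately show "0 < 1 - real b * y" by simp
  have "1 / y < real b + 1"
    using b_floor by (metis floor_correct of_int_1 of_int_add)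
  then have "1 / real (b + 1) < y"
    using assms(1) by (simp add: divide_less_eq mult.commute add.commute)
  then have "real b / real (b + 1) < real b * y"
    using b1 by (simp add: mult_strict_left_mono[of "1 / real (b + 1)" y "real b", simplified])
  moreover have "1 - real b / real (b + 1) = 1 / real (b + 1)"
    by (simp add: field_simps)
  ultimately show "1 - real b * y < 1 / real (b + 1)" by linarith
  show "1 - real b * y \<notin> \<rat>"
  proof
    assume "1 - real b * y \<in> \<rat>"
    moreover have "y = (1 - (1 - real b * y)) / real b" using b1 by simp
    ultimately have "y \<in> \<rat>" by (metis Rats_diff Rats_divide Rats_1 Rats_of_nat)
    with assms(3) show False by simp
  qed
qed

text \<open>Irrationality of \<open>x\<close> keeps every remainder in \<open>(0,1)\<close>, which makes the digits
  strictly increasing.\<close>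
definition pierce_rem :: "real \<Rightarrow> nat \<Rightarrow> real" where
  "pierce_rem x = rec_nat x (\<lambda>_ y. 1 - real (nat \<lfloor>1 / y\<rfloor>) * y)"

definition pierce_digit :: "real \<Rightarrow> nat \<Rightarrow> nat" where
  "pierce_digit x k = nat \<lfloor>1 / pierce_rem x k\<rfloor>"

lemma pierce_rem_0 [simp]: "pierce_rem x 0 = x"
  by (simp add: pierce_rem_def)

lemma pierce_rem_Suc: "pierce_rem x (Suc k) = 1 - real (pierce_digit x k) * pierce_rem x k"
  by (simp add: pierce_rem_def pierce_digit_def)

context
  fixes x :: real
  assumes x: "0 < x" "x < 1" "x \<notin> \<rat>"
begin

lemma pierce_rem_bounds: "0 < pierce_rem x k \<and> pierce_rem x k < 1 \<and> pierce_rem x k \<notin> \<rat>"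
proof (induction k)
  case (Suc k)
  have "1 / real (pierce_digit x k + 1) \<le> 1" by simp
  then show ?case
    using pierce_step_bounds[of "pierce_rem x k"] Suc unfolding pierce_rem_Suc pierce_digit_def
    by fastforce
qed (use x in simp)

lemma pierce_seq_pierce_digit: "pierce_seq (pierce_digit x)"
  unfolding pierce_seq_def strict_mono_Suc_iff
proof (intro conjI allI)
  show "0 < pierce_digit x 0"
    using pierce_step_bounds(1)[of x] x by (simp add: pierce_digit_def)
  fix k
  have "0 < pierce_rem x (Suc k)" "pierce_rem x (Suc k) < 1 / real (pierce_digit x k + 1)"
    using pierce_step_bounds[of "pierce_rem x k", folded pierce_digit_def] pierce_rem_bounds[of k]
    unfolding pierce_rem_Suc by auto
  then have "real (pierce_digit x k + 1) < 1 / pierce_rem x (Suc k)"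
    by (simp add: less_divide_eq divide_less_eq mult.commute)
  then have "int (pierce_digit x k + 1) \<le> \<lfloor>1 / pierce_rem x (Suc k)\<rfloor>"
    by (simp add: le_floor_iff)
  then show "pierce_digit x k < pierce_digit x (Suc k)"
    unfolding pierce_digit_def[of x "Suc k"] by linarith
qed

lemma pierce_digit_pos: "0 < real (pierce_digit x k)"
  using pierce_seq_Suc_le[OF pierce_seq_pierce_digit, of k] by simp

lemma pierce_rem_eq: "pierce_rem x k = (1 - pierce_rem x (Suc k)) / real (pierce_digit x k)"
  using pierce_digit_pos[of k] by (simp add: pierce_rem_Suc)

lemma pierce_partial_sum_eq:
  "x = (\<Sum>j<Suc k. (-1) ^ j * recip_prod (pierce_digit x) j)
        + (-1) ^ Suc k * pierce_rem x (Suc k) * recip_prod (pierce_digit x) k"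
proof (induction k)
  case 0
  have "x = (1 - pierce_rem x 1) / real (pierce_digit x 0)"
    using pierce_rem_eq[of 0] by simp
  then show ?case by (simp add: recip_prod_def diff_divide_distrib)
next
  case (Suc k)
  let ?q = "pierce_digit x" and ?r = "pierce_rem x"
  have "(-1) ^ Suc k * ?r (Suc k) * recip_prod ?q k
      = (-1) ^ Suc k * recip_prod ?q (Suc k) + (-1) ^ Suc (Suc k) * ?r (Suc (Suc k)) * recip_prod ?q (Suc k)"
    using pierce_digit_pos[of "Suc k"] unfolding pierce_rem_eq[of "Suc k"] recip_prod_Suc
    by (simp add: field_simps)
  then show ?case using Suc by simp
qed

lemma alt_recip_sum_pierce_digit: "alt_recip_sum (pierce_digit x) = x"
proof -
  let ?q = "pierce_digit x" and ?r = "pierce_rem x"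
  have "(\<lambda>k. (-1) ^ Suc k * ?r (Suc k) * recip_prod ?q k) \<longlonglongrightarrow> 0"
  proof (rule Lim_null_comparison[OF _ recip_prod_tendsto_0[OF pierce_seq_pierce_digit]])
    have "\<bar>?r (Suc k)\<bar> * recip_prod ?q k \<le> recip_prod ?q k" for k
      using pierce_rem_bounds[of "Suc k"] recip_prod_pos[OF pierce_seq_pierce_digit, of k]
      by (intro mult_left_le_one_le) auto
    then show "\<forall>\<^sub>F k in sequentially. norm ((-1) ^ Suc k * ?r (Suc k) * recip_prod ?q k)
        \<le> recip_prod ?q k"
      using recip_prod_pos[OF pierce_seq_pierce_digit]
      by (intro always_eventually) (simp add: abs_mult less_imp_le)
  qed
  then have "(\<lambda>k. x - (-1) ^ Suc k * ?r (Suc k) * recip_prod ?q k) \<longlonglongrightarrow> x - 0"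
    by (intro tendsto_diff tendsto_const)
  moreover have "x - (-1) ^ Suc k * ?r (Suc k) * recip_prod ?q k
      = (\<Sum>j<Suc k. (-1) ^ j * recip_prod ?q j)" for k
    using pierce_partial_sum_eq[of k] by linarith
  ultimately have "(\<lambda>k. \<Sum>j<Suc k. (-1) ^ j * recip_prod ?q j) \<longlonglongrightarrow> x"
    by simp
  then have "(\<lambda>k. \<Sum>j<k. (-1) ^ j * recip_prod ?q j) \<longlonglongrightarrow> x"
    by (rule LIMSEQ_imp_Suc)
  then show ?thesis
    using sums_unique2[OF alt_recip_sum_Leibniz(1)[OF pierce_seq_pierce_digit]]
    by (simp add: sums_def)
qed

end

definition cumsum :: "(nat \<Rightarrow> nat) \<Rightarrow> nat \<Rightarrow> nat" where
  "cumsum g j = (\<Sum>i\<le>j. g i)"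

lemma cumsum_Suc: "cumsum g (Suc j) = cumsum g j + g (Suc j)"
  by (simp add: cumsum_def)

lemma obar_term_eq_recip_prod: "obar_term g k = (-1) ^ k * recip_prod (cumsum g) k"
  by (simp add: obar_term_def recip_prod_def cumsum_def)

lemma pierce_seq_cumsum: "\<forall>k. 1 \<le> g k \<Longrightarrow> pierce_seq (cumsum g)"
  unfolding pierce_seq_def strict_mono_Suc_iff
  by (auto simp: cumsum_Suc Suc_le_eq) (simp add: cumsum_def)

lemma inj_cumsum: "inj cumsum"
proof (rule injI, rule ext)
  fix g h :: "nat \<Rightarrow> nat" and k
  assume eq: "cumsum g = cumsum h"
  show "g k = h k"
  proof (cases k)
    case 0
    then show ?thesis using fun_cong[OF eq, of 0] by (simp add: cumsum_def)
  next
    case (Suc j)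
    then show ?thesis using fun_cong[OF eq, of j] fun_cong[OF eq, of k] by (simp add: cumsum_Suc)
  qed
qed

lemma pierce_seq_imp_cumsum:
  assumes "pierce_seq q"
  obtains g where "\<forall>k. 1 \<le> g k" and "cumsum g = q"
proof
  define g where "g k = (if k = 0 then q 0 else q k - q (k - 1))" for k
  have mono: "q k < q (Suc k)" for k
    using assms by (simp add: pierce_seq_def strict_mono_Suc_iff)
  show "\<forall>k. 1 \<le> g k"
  proof
    fix k show "1 \<le> g k"
      using assms mono[of "k - 1"] by (cases k) (auto simp: g_def pierce_seq_def)
  qed
  show "cumsum g = q"
  proof
    fix j show "cumsum g j = q j"
      by (induction j) (auto simp: cumsum_def g_def less_imp_le[OF mono])
  qed
qed

lemma obar_term_sums_iff:
  assumes "\<forall>k. 1 \<le> g k"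
  shows "obar_term g sums x \<longleftrightarrow> alt_recip_sum (cumsum g) = x"
  using alt_recip_sum_Leibniz(1)[OF pierce_seq_cumsum[OF assms]] sums_unique2
  unfolding obar_term_eq_recip_prod by metis

lemma obar_expansion_unique:
  assumes "x \<in> {0<..<1} - \<rat>"
  shows "\<exists>!g. (\<forall>k. 1 \<le> g k) \<and> obar_term g sums x"
proof -
  have x: "0 < x" "x < 1" "x \<notin> \<rat>" using assms by auto
  obtain g where g: "\<forall>k. 1 \<le> g k" "cumsum g = pierce_digit x"
    using pierce_seq_imp_cumsum[OF pierce_seq_pierce_digit[OF x]] .
  show ?thesis
  proof (rule ex1I)
    show "(\<forall>k. 1 \<le> g k) \<and> obar_term g sums x"
      using g obar_term_sums_iff alt_recip_sum_pierce_digit[OF x] by simp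
    fix h assume h: "(\<forall>k. 1 \<le> h k) \<and> obar_term h sums x"
    then have "alt_recip_sum (cumsum h) = alt_recip_sum (cumsum g)"
      using g obar_term_sums_iff[of h] alt_recip_sum_pierce_digit[OF x] by simp
    then have "cumsum h = cumsum g"
      using alt_recip_sum_inj pierce_seq_cumsum g(1) h by blast
    then show "h = g" using inj_cumsum by (simp add: inj_eq)
  qed
qed

lemma obar_digits_expansion:
  assumes "x \<in> {0<..<1} - \<rat>"
  shows "\<forall>k. 1 \<le> obar_digits x k" and "obar_term (obar_digits x) sums x"
  using theI'[OF obar_expansion_unique[OF assms]] unfolding obar_digits_def by auto

lemma obar_partial_sum_error:
  assumes "\<forall>k. 1 \<le> g k" and "obar_term g sums x"
  shows "\<bar>x - (\<Sum>k<m. obar_term g k)\<bar> \<le> inverse (fact (Suc m))"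
proof -
  have q: "pierce_seq (cumsum g)" by (rule pierce_seq_cumsum[OF assms(1)])
  have "x = alt_recip_sum (cumsum g)"
    using assms obar_term_sums_iff by metis
  then show ?thesis
    using alt_recip_sum_remainder[OF q, of m] recip_prod_le_inverse_fact[OF q, of m]
    unfolding obar_term_eq_recip_prod by linarith
qed

lemma hausdorff_pre_le_finite_cball_cover:
  fixes E :: "'a::euclidean_space set"
  assumes "finite C" and "E \<subseteq> (\<Union>c\<in>C. cball c \<rho>)" and "0 \<le> \<rho>" and "2 * \<rho> \<le> \<delta>"
  shows "hausdorff_pre s \<delta> E \<le> ennreal (real (card C) * (2 * \<rho>) powr s)"
proof -
  obtain h where "bij_betw h {0..<card C} C"
    using ex_bij_betw_nat_finite[OF assms(1)] by blast
  then have h: "h ` {..<card C} = C"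
    by (simp add: bij_betw_def atLeast0LessThan)
  define U where "U i = (if i < card C then cball (h i) \<rho> else {})" for i
  have "E \<subseteq> (\<Union>i. U i)"
  proof
    fix x assume "x \<in> E"
    then obtain c where "c \<in> C" and "x \<in> cball c \<rho>"
      using assms(2) by blast
    moreover obtain i where "i < card C" and "c = h i"
      using \<open>c \<in> C\<close> h by blast
    ultimately show "x \<in> (\<Union>i. U i)" by (auto simp: U_def)
  qed
  moreover have "bounded (U i) \<and> diameter (U i) \<le> \<delta>" for i
    using assms(3,4) by (simp add: U_def)
  ultimately have "hausdorff_pre s \<delta> E \<le> (\<Sum>i. ennreal (diameter (U i) powr s))"
    unfolding hausdorff_pre_def by (intro INF_lower) auto
  also have "\<dots> = (\<Sum>i<card C. ennreal (diameter (U i) powr s))"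
    by (rule suminf_finite) (auto simp: U_def)
  also have "\<dots> = ennreal (real (card C) * (2 * \<rho>) powr s)"
    using assms(3) by (simp add: U_def ennreal_of_nat_eq_real_of_nat ennreal_mult)
  finally show ?thesis .
qed

lemma hausdorff_measure_eq_0_if_finite_cball_covers:
  fixes E :: "'a::euclidean_space set" and C :: "nat \<Rightarrow> 'a set" and \<rho> :: "nat \<Rightarrow> real"
  assumes "\<And>m. finite (C m)" and "\<And>m. E \<subseteq> (\<Union>c\<in>C m. cball c (\<rho> m))"
    and "\<And>m. 0 \<le> \<rho> m" and "\<rho> \<longlonglongrightarrow> 0" and "(\<lambda>m. real (card (C m)) * \<rho> m powr s) \<longlonglongrightarrow> 0"
  shows "hausdorff_measure s E = 0"
proof -
  have diam: "(\<lambda>m. 2 * \<rho> m) \<longlonglongrightarrow> 0"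
    using tendsto_mult[OF tendsto_const assms(4), of 2] by simp
  have sum: "(\<lambda>m. real (card (C m)) * (2 * \<rho> m) powr s) \<longlonglongrightarrow> 0"
    using tendsto_mult[OF tendsto_const assms(5), of "2 powr s"] assms(3)
    by (simp add: powr_mult mult.left_commute)
  have "hausdorff_pre s \<delta> E = 0" if "0 < \<delta>" for \<delta>
  proof -
    have "hausdorff_pre s \<delta> E \<le> 0 + ennreal e" if "0 < e" for e
    proof -
      obtain m where m: "2 * \<rho> m < \<delta>" "real (card (C m)) * (2 * \<rho> m) powr s < e"
        using eventually_conj[OF order_tendstoD(2)[OF diam \<open>0 < \<delta>\<close>] order_tendstoD(2)[OF sum \<open>0 < e\<close>]]
        unfolding eventually_sequentially by blast
      have "hausdorff_pre s \<delta> E \<le> ennreal (real (card (C m)) * (2 * \<rho> m) powr s)"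
        using m(1) by (intro hausdorff_pre_le_finite_cball_cover assms(1-3)) simp
      also have "\<dots> \<le> ennreal e"
        using m(2) by (intro ennreal_leI) linarith
      finally show ?thesis by simp
    qed
    then have "hausdorff_pre s \<delta> E \<le> 0"
      by (rule ennreal_le_epsilon)
    then show ?thesis by simp
  qed
  then have "hausdorff_measure s E = (SUP \<delta>\<in>{0::real<..}. 0)"
    unfolding hausdorff_measure_def by (intro SUP_cong) auto
  then show ?thesis by simp
qed

lemma hausdorff_dim_eq_0I:
  assumes "\<And>s. 0 < s \<Longrightarrow> hausdorff_measure s E = 0"
  shows "hausdorff_dim E = 0"
proof -
  have "hausdorff_dim E = Inf (ereal ` {0<..})"
    unfolding hausdorff_dim_def using assms by (intro arg_cong[where f = Inf]) auto
  also have "\<dots> = 0"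
  proof (rule antisym)
    show "Inf (ereal ` {0<..}) \<le> 0"
    proof (rule ereal_le_epsilon2)
      fix e :: real assume "0 < e"
      then show "Inf (ereal ` {0<..}) \<le> 0 + ereal e" by (simp add: Inf_lower)
    qed
  qed (auto intro: Inf_greatest)
  finally show ?thesis .
qed

lemma power_mult_inverse_fact_powr_tendsto_0:
  fixes c s :: real
  assumes "0 < c" and "0 < s"
  shows "(\<lambda>m. c ^ m * inverse (fact m) powr s) \<longlonglongrightarrow> 0"
proof -
  define d where "d = c powr (1 / s)"
  have "(\<lambda>m. inverse (fact m) * d ^ m) \<longlonglongrightarrow> 0"
    by (rule summable_LIMSEQ_zero[OF summable_exp])
  then have "(\<lambda>m. (d ^ m * inverse (fact m)) powr s) \<longlonglongrightarrow> 0"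
    using assms unfolding d_def
    by (intro tendsto_zero_powrI[OF _ tendsto_const]) (auto simp: mult.commute)
  moreover have "(d ^ m * inverse (fact m)) powr s = c ^ m * inverse (fact m) powr s" for m
  proof -
    have "(d ^ m) powr s = (d powr real m) powr s"
      using assms by (simp add: d_def powr_realpow)
    also have "\<dots> = c powr real m"
      using assms by (simp add: d_def powr_powr)
    also have "\<dots> = c ^ m"
      using assms by (simp add: powr_realpow)
    finally show ?thesis
      using assms by (simp add: d_def powr_mult)
  qed
  ultimately show ?thesis by simp
qed

lemma obar_term_cong:
  assumes "\<And>i. i \<le> k \<Longrightarrow> g i = h i"
  shows "obar_term g k = obar_term h k"
  unfolding obar_term_def using assms by (intro arg_cong2[where f = "(/)"] prod.cong sum.cong) auto

definition obar_prefix_values :: "nat \<Rightarrow> nat \<Rightarrow> real set" where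
  "obar_prefix_values n m =
     (\<lambda>w. \<Sum>k<m. obar_term (\<lambda>i. w ! i) k) ` {w. set w \<subseteq> {1..n} \<and> length w = m}"

lemma finite_obar_prefix_values: "finite (obar_prefix_values n m)"
  unfolding obar_prefix_values_def by (intro finite_imageI finite_lists_length_eq) simp

lemma card_obar_prefix_values_le: "card (obar_prefix_values n m) \<le> n ^ m"
proof -
  have "card (obar_prefix_values n m) \<le> card {w. set w \<subseteq> {1..n} \<and> length w = m}"
    unfolding obar_prefix_values_def by (intro card_image_le finite_lists_length_eq) simp
  also have "\<dots> = n ^ m"
    by (simp add: card_lists_length_eq)
  finally show ?thesis .
qed

lemma Omega_subset_prefix_cballs:
  "Omega n \<subseteq> (\<Union>c\<in>obar_prefix_values n m. cball c (inverse (fact (Suc m))))"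
proof
  fix x assume "x \<in> Omega n"
  then have x: "x \<in> {0<..<1} - \<rat>" and "\<forall>k\<ge>1. obar_symbol k x \<in> {1..n}"
    unfolding Omega_def by auto
  then have symbols: "obar_digits x k \<in> {1..n}" for k
    unfolding obar_symbol_def by (metis diff_Suc_1 le_add1 plus_1_eq_Suc)
  define w where "w = map (obar_digits x) [0..<m]"
  have "(\<Sum>k<m. obar_term (obar_digits x) k) = (\<Sum>k<m. obar_term (\<lambda>i. w ! i) k)"
    unfolding w_def by (intro sum.cong obar_term_cong) auto
  moreover have "set w \<subseteq> {1..n} \<and> length w = m"
    using symbols unfolding w_def by auto
  ultimately have "(\<Sum>k<m. obar_term (obar_digits x) k) \<in> obar_prefix_values n m"
    unfolding obar_prefix_values_def by auto
  moreover have "x \<in> cball (\<Sum>k<m. obar_term (obar_digits x) k) (inverse (fact (Suc m)))"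
    using obar_partial_sum_error[OF obar_digits_expansion[OF x]] by (simp add: dist_real_def abs_minus_commute)
  ultimately show "x \<in> (\<Union>c\<in>obar_prefix_values n m. cball c (inverse (fact (Suc m))))"
    by blast
qed

lemma card_obar_prefix_values_powr_tendsto_0:
  assumes "1 \<le> n" and "0 < s"
  shows "(\<lambda>m. real (card (obar_prefix_values n m)) * inverse (fact (Suc m)) powr s) \<longlonglongrightarrow> 0"
proof (rule Lim_null_comparison[OF _ power_mult_inverse_fact_powr_tendsto_0[of "real n" s]])
  have "real (card (obar_prefix_values n m)) \<le> real n ^ m" for m
    using card_obar_prefix_values_le[of n m] by (metis of_nat_le_iff of_nat_power)
  moreover have "inverse (fact (Suc m)) powr s \<le> inverse (fact m :: real) powr s" for m
    using assms(2) by (intro powr_mono2) (auto simp del: fact_Suc intro: fact_mono)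
  ultimately show "\<forall>\<^sub>F m in sequentially.
      norm (real (card (obar_prefix_values n m)) * inverse (fact (Suc m)) powr s)
        \<le> real n ^ m * inverse (fact m) powr s"
    by (intro always_eventually allI) (simp add: mult_mono del: fact_Suc)
qed (use assms in auto)

theorem theorem3:
  fixes n :: nat
  assumes "n \<ge> 1"
  shows "hausdorff_dim (Omega n) = 0"
proof (rule hausdorff_dim_eq_0I)
  fix s :: real
  assume "0 < s"
  show "hausdorff_measure s (Omega n) = 0"
    by (rule hausdorff_measure_eq_0_if_finite_cball_covers[OF finite_obar_prefix_values
          Omega_subset_prefix_cballs _ inverse_fact_Suc_tendsto_0
          card_obar_prefix_values_powr_tendsto_0[OF assms \<open>0 < s\<close>]])
      (simp del: fact_Suc)
qed

end
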